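(* Let $m\ge 1$, $n\ge 1$ and $N>2n$ be integers and let $T\ge 1$. For parameters $M_0,M_1,\dots,M_n\in\mathbb R^{m\times m}$ with $M_0=M_0^\top$, let $\mathbf M_N$ be the $mN\times mN$ matrix, viewed as an $N\times N$ array of $m\times m$ blocks indexed by $i,j\in\{1,\dots,N\}$, whose $(i,j)$ block equals $M_k$ if $i-j\equiv k \pmod N$ with $0\le k\le n$, equals $M_k^\top$ if $j-i\equiv k\pmod N$ with $1\le k\le n$, and equals $0$ otherwise. The parameters are admissible if $\mathbf M_N$ is positive definite, and then they define the Gaussian density $$p_{(M_0,\dots,M_n)}(y)=(2\pi)^{-mN/2}\det(\mathbf M_N)^{1/2}\exp\!\left(-\tfrac12 y^\top\mathbf M_N y\right),\qquad y\in\mathbb R^{mN}.$$ Let $y^{(1)},\dots,y^{(T)}\in\mathbb R^{mN}$ be observations, treated as independent samples from this density, and write $y^{(t)}=(y^{(t)}(1)^\top,\dots,y^{(t)}(N)^\top)^\top$ with $y^{(t)}(j)\in\mathbb R^m$. Define the sample covariances $$\hat\Sigma_k=\frac{1}{NT}\sum_{t=1}^T\sum_{j=1}^N y^{(t)}(j+k)\,y^{(t)}(j)^\top,\qquad k=0,1,\dots,n,$$ with time indices taken modulo $N$. Suppose $\hat{\boldsymbol\Sigma}_N$ is a solution of the block-circulant band extension problem with data $\hat\Sigma_0,\dots,\hat\Sigma_n$, i.e. $\hat{\boldsymbol\Sigma}_N$ is a symmetric positive definite $mN\times mN$ matrix whose $(i,j)$ block equals $\Sigma_{(i-j)\bmod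 N}$ for some matrices $\Sigma_0,\dots,\Sigma_{N-1}\in\mathbb R^{m\times m}$ with $\Sigma_k=\hat\Sigma_k$ for $k=0,\dots,n$, and such that $\hat{\boldsymbol\Sigma}_N^{-1}$ is block-circulant and banded of bandwidth $n$ (its $(i,j)$ block is zero whenever the cyclic distance $\min\{(i-j)\bmod N,(j-i)\bmod N\}$ exceeds $n$). Then the maximum likelihood estimates of $(M_0,M_1,\dots,M_n)$, i.e. the admissible parameters maximizing $\prod_{t=1}^T p_{(M_0,\dots,M_n)}(y^{(t)})$, are the nonzero blocks of $\hat{\boldsymbol\Sigma}_N^{-1}$: $\hat M_k$ is the $(k+1,1)$ block of $\hat{\boldsymbol\Sigma}_N^{-1}$, $k=0,\dots,n$.
   Context: This is the maximum likelihood identification problem for (Gaussian) AR-type stationary reciprocal models $\mathbf M_N\mathbf y=\mathbf e$ on the discrete circle $\mathbb Z_N$; the likelihood does not require the true data distribution to be Gaussian. A matrix is block-circulant if its $(i,j)$ block depends only on $(i-j)\bmod N$. *)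

theory Defs
  imports Complex_Main "Jordan_Normal_Form.Determinant"
begin

text \<open>Conventions: block indices i,j and in-block indices a,b are 0-based;
 an mN-vector/matrix entry r corresponds to block r div m, in-block index r mod m.\<close>

definition pos_def_mat :: "nat \<Rightarrow> real mat \<Rightarrow> bool" where
  "pos_def_mat d A \<longleftrightarrow> A \<in> carrier_mat d d \<and>
     (\<forall>x \<in> carrier_vec d. x \<noteq> 0\<^sub>v d \<longrightarrow> x \<bullet> (A *\<^sub>v x) > 0)"

definition recip_mat :: "nat \<Rightarrow> nat \<Rightarrow> nat \<Rightarrow> (nat \<Rightarrow> real mat) \<Rightarrow> real mat" where
  "recip_mat m N n M = mat (m*N) (m*N) (\<lambda>(r,c).
     let i = int (r div m); j = int (c div m); a = r mod m; b = c mod m in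
     if (i - j) mod int N \<le> int n then M (nat ((i - j) mod int N)) $$ (a, b)
     else if (j - i) mod int N \<le> int n then M (nat ((j - i) mod int N)) $$ (b, a)
     else 0)"

definition admissible :: "nat \<Rightarrow> nat \<Rightarrow> nat \<Rightarrow> (nat \<Rightarrow> real mat) \<Rightarrow> bool" where
  "admissible m N n M \<longleftrightarrow> (\<forall>k\<le>n. M k \<in> carrier_mat m m) \<and> transpose_mat (M 0) = M 0 \<and>
     pos_def_mat (m*N) (recip_mat m N n M)"

definition gauss_density :: "nat \<Rightarrow> nat \<Rightarrow> nat \<Rightarrow> (nat \<Rightarrow> real mat) \<Rightarrow> real vec \<Rightarrow> real" where
  "gauss_density m N n M y =
     (2 * pi) powr (- real (m*N) / 2) * sqrt (det (recip_mat m N n M))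
       * exp (- (1/2) * (y \<bullet> (recip_mat m N n M *\<^sub>v y)))"

definition likelihood :: "nat \<Rightarrow> nat \<Rightarrow> nat \<Rightarrow> nat \<Rightarrow> (nat \<Rightarrow> real vec) \<Rightarrow> (nat \<Rightarrow> real mat) \<Rightarrow> real" where
  "likelihood m N n T y M = (\<Prod>t<T. gauss_density m N n M (y t))"

definition sample_cov :: "nat \<Rightarrow> nat \<Rightarrow> nat \<Rightarrow> (nat \<Rightarrow> real vec) \<Rightarrow> nat \<Rightarrow> real mat" where
  "sample_cov m N T y k = mat m m (\<lambda>(a,b).
     (1 / (real N * real T)) * (\<Sum>t<T. \<Sum>j<N. y t $ (((j + k) mod N) * m + a) * y t $ (j * m + b)))"

definition block_circulant :: "nat \<Rightarrow> nat \<Rightarrow> (nat \<Rightarrow> real mat) \<Rightarrow> real mat \<Rightarrow> bool" where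
  "block_circulant m N S A \<longleftrightarrow> A \<in> carrier_mat (m*N) (m*N) \<and>
     (\<forall>r < m*N. \<forall>c < m*N.
        A $$ (r,c) = S ((r div m + N - c div m) mod N) $$ (r mod m, c mod m))"

definition cyc_dist :: "nat \<Rightarrow> nat \<Rightarrow> nat \<Rightarrow> nat" where
  "cyc_dist N i j = min ((i + N - j) mod N) ((j + N - i) mod N)"

definition banded :: "nat \<Rightarrow> nat \<Rightarrow> nat \<Rightarrow> real mat \<Rightarrow> bool" where
  "banded m N n A \<longleftrightarrow> (\<forall>r < m*N. \<forall>c < m*N. cyc_dist N (r div m) (c div m) > n \<longrightarrow> A $$ (r,c) = 0)"

definition band_ext_solution :: "nat \<Rightarrow> nat \<Rightarrow> nat \<Rightarrow> (nat \<Rightarrow> real mat) \<Rightarrow> real mat \<Rightarrow> real mat \<Rightarrow> bool" where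
  "band_ext_solution m N n Shat Sig Sinv \<longleftrightarrow>
     transpose_mat Sig = Sig \<and> pos_def_mat (m*N) Sig \<and>
     (\<exists>S. (\<forall>k<N. S k \<in> carrier_mat m m) \<and> (\<forall>k\<le>n. S k = Shat k) \<and> block_circulant m N S Sig) \<and>
     Sinv \<in> carrier_mat (m*N) (m*N) \<and> Sig * Sinv = 1\<^sub>m (m*N) \<and>
     (\<exists>Q. block_circulant m N Q Sinv) \<and> banded m N n Sinv"

text \<open>(k+1,1) block (1-based) of a matrix, i.e. rows k*m.., columns 0..m-1.\<close>
definition block_of :: "nat \<Rightarrow> real mat \<Rightarrow> nat \<Rightarrow> real mat" where
  "block_of m A k = mat m m (\<lambda>(a,b). A $$ (k*m + a, b))"

end

theory Submission
  imports Defs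
begin

(* Up to constants, the log-likelihood of parameters with A = M_N is (T/2) (ln det A - tr (A Sigma))
   for ANY matrix Sigma whose blocks agree with the sample covariances at the lags where A is
   nonzero: A is block-circulant of bandwidth n, so the data enter only through the sample
   covariances at lags 0..n. Choosing for Sigma the band extension solution, a Cholesky
   factorisation reduces ln det A - tr (A Sigma) <= ln det (Sigma^-1) - mN to ln t <= t - 1, with
   equality exactly for A = Sigma^-1. As Sigma^-1 is block-circulant and banded, it is M_N for its
   own first n+1 blocks, which are therefore the unique maximiser. *)

section \<open>Quadratic forms and the Cholesky factorisation\<close>

lemma symmetric_mat_index:
  fixes A :: "'a mat"
  assumes "transpose_mat A = A" "A \<in> carrier_mat d d" "i < d" "j < d"
  shows "A $$ (i,j) = A $$ (j,i)"
  using assms by (metis carrier_matD index_transpose_mat(1))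

lemma quadratic_form_eq_double_sum:
  fixes A :: "real mat"
  assumes "A \<in> carrier_mat d d" "x \<in> carrier_vec d"
  shows "x \<bullet> (A *\<^sub>v x) = (\<Sum>i<d. \<Sum>j<d. x$i * A$$(i,j) * x$j)"
  using assms
  by (auto simp: scalar_prod_def sum_distrib_left atLeast0LessThan row_def mult.commute
      mult.left_commute intro!: sum.cong)

lemma pos_def_mat_double_sum_pos:
  fixes S :: "real mat"
  assumes "pos_def_mat d S" "x \<in> carrier_vec d" "x \<noteq> 0\<^sub>v d"
  shows "(\<Sum>i<d. \<Sum>j<d. x$i * S$$(i,j) * x$j) > 0"
  using assms quadratic_form_eq_double_sum[of S d x] unfolding pos_def_mat_def by auto

lemma transpose_mult_self_index:
  fixes U :: "real mat"
  assumes "U \<in> carrier_mat d d" "i < d" "j < d"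
  shows "(transpose_mat U * U) $$ (i,j) = (\<Sum>k<d. U$$(k,i) * U$$(k,j))"
  using assms by (auto simp: scalar_prod_def atLeast0LessThan col_def row_def intro!: sum.cong)

lemma double_sum_lessThan_Suc_split:
  fixes S :: "real mat" and z :: "real vec"
  shows "(\<Sum>i<Suc d. \<Sum>j<Suc d. z$i * S$$(i,j) * z$j) =
     z$0 * S$$(0,0) * z$0 + (\<Sum>j<d. z$0 * S$$(0,Suc j) * z$(Suc j))
     + (\<Sum>i<d. z$(Suc i) * S$$(Suc i,0) * z$0)
     + (\<Sum>i<d. \<Sum>j<d. z$(Suc i) * S$$(Suc i,Suc j) * z$(Suc j))"
  by (simp only: sum.lessThan_Suc_shift sum.distrib add.assoc)

definition schur_complement :: "nat \<Rightarrow> real mat \<Rightarrow> real mat" where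
  "schur_complement d S =
     mat d d (\<lambda>(i,j). S$$(Suc i, Suc j) - S$$(Suc i, 0) * S$$(0, Suc j) / S$$(0,0))"

lemma pos_def_mat_corner_pos:
  assumes "pos_def_mat (Suc d) S"
  shows "S $$ (0,0) > 0"
proof -
  define e where "e = vec (Suc d) (\<lambda>i. if i = 0 then 1 else 0 :: real)"
  have e: "e \<in> carrier_vec (Suc d)" "e \<noteq> 0\<^sub>v (Suc d)"
    unfolding e_def by (auto dest!: arg_cong[where f="\<lambda>v. v$0"])
  have "(\<Sum>i<Suc d. \<Sum>j<Suc d. e$i * S$$(i,j) * e$j) = S $$ (0,0)"
    unfolding double_sum_lessThan_Suc_split by (simp add: e_def)
  then show ?thesis using pos_def_mat_double_sum_pos[OF assms e] by simp
qed

text \<open>Completing the square: z extends x by the first coordinate minimising the quadratic form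
  of S.\<close>
lemma schur_complement_quadratic_form:
  fixes S :: "real mat" and x z :: "real vec"
  assumes sym: "\<And>i j. i < Suc d \<Longrightarrow> j < Suc d \<Longrightarrow> S$$(i,j) = S$$(j,i)"
    and s: "S $$ (0,0) \<noteq> 0"
    and z: "z = vec (Suc d) (\<lambda>i. if i = 0 then - (\<Sum>j<d. S$$(0,Suc j) * x$j) / S$$(0,0)
                                   else x$(i - 1))"
  shows "(\<Sum>i<d. \<Sum>j<d. x$i * schur_complement d S $$ (i,j) * x$j) =
    (\<Sum>i<Suc d. \<Sum>j<Suc d. z$i * S$$(i,j) * z$j)"
proof -
  define s where "s = S $$ (0,0)"
  define \<beta> where "\<beta> = (\<Sum>j<d. S$$(0,Suc j) * x$j)"
  define Q where "Q = (\<Sum>i<d. \<Sum>j<d. x$i * S$$(Suc i,Suc j) * x$j)"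
  have \<beta>': "(\<Sum>i<d. x$i * S$$(Suc i,0)) = \<beta>"
    unfolding \<beta>_def by (auto intro!: sum.cong simp: sym)
  have "(\<Sum>i<Suc d. \<Sum>j<Suc d. z$i * S$$(i,j) * z$j) =
      (-\<beta>/s) * s * (-\<beta>/s) + (-\<beta>/s) * \<beta> + \<beta> * (-\<beta>/s) + Q"
  proof -
    have "(\<Sum>j<d. z$0 * S$$(0,Suc j) * z$(Suc j)) = (\<Sum>j<d. (-\<beta>/s) * (S$$(0,Suc j) * x$j))"
      by (auto simp: z s_def \<beta>_def intro!: sum.cong)
    also have "\<dots> = (-\<beta>/s) * \<beta>" unfolding sum_distrib_left[symmetric] \<beta>_def ..
    finally have row: "(\<Sum>j<d. z$0 * S$$(0,Suc j) * z$(Suc j)) = (-\<beta>/s) * \<beta>" .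
    have "(\<Sum>i<d. z$(Suc i) * S$$(Suc i,0) * z$0) = (\<Sum>i<d. (x$i * S$$(Suc i,0)) * (-\<beta>/s))"
      by (auto simp: z s_def \<beta>_def intro!: sum.cong)
    also have "\<dots> = \<beta> * (-\<beta>/s)" unfolding sum_distrib_right[symmetric] \<beta>' ..
    finally have col: "(\<Sum>i<d. z$(Suc i) * S$$(Suc i,0) * z$0) = \<beta> * (-\<beta>/s)" .
    have rest: "(\<Sum>i<d. \<Sum>j<d. z$(Suc i) * S$$(Suc i,Suc j) * z$(Suc j)) = Q"
      unfolding Q_def by (auto simp: z intro!: sum.cong)
    show ?thesis unfolding double_sum_lessThan_Suc_split row col rest
      by (simp add: z s_def \<beta>_def)
  qed
  also have "\<dots> = Q - \<beta> * \<beta> / s" using s by (simp add: s_def field_simps)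
  also have "\<dots> = Q - (\<Sum>i<d. x$i * S$$(Suc i, 0)) * (\<Sum>j<d. S$$(0, Suc j) * x$j) / s"
    unfolding \<beta>' \<beta>_def ..
  also have "\<dots> = (\<Sum>i<d. \<Sum>j<d. x$i * S$$(Suc i,Suc j) * x$j
                     - (x$i * S$$(Suc i, 0)) * (S$$(0, Suc j) * x$j) / s)"
    unfolding Q_def sum_subtractf sum_divide_distrib[symmetric] sum_product by simp
  also have "\<dots> = (\<Sum>i<d. \<Sum>j<d. x$i * schur_complement d S $$ (i,j) * x$j)"
    unfolding schur_complement_def s_def
    by (auto intro!: sum.cong simp: algebra_simps diff_divide_distrib)
  finally show ?thesis ..
qed

lemma schur_complement_pos_def:
  fixes S :: "real mat"
  assumes S: "S \<in> carrier_mat (Suc d) (Suc d)" "transpose_mat S = S" "pos_def_mat (Suc d) S"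
  shows "pos_def_mat d (schur_complement d S)"
  unfolding pos_def_mat_def
proof (intro conjI ballI impI)
  show Sc: "schur_complement d S \<in> carrier_mat d d" by (simp add: schur_complement_def)
  fix x :: "real vec" assume x: "x \<in> carrier_vec d" "x \<noteq> 0\<^sub>v d"
  define z where "z = vec (Suc d) (\<lambda>i. if i = 0 then - (\<Sum>j<d. S$$(0,Suc j) * x$j) / S$$(0,0)
                                          else x$(i - 1))"
  have z: "z \<in> carrier_vec (Suc d)" "z \<noteq> 0\<^sub>v (Suc d)"
  proof -
    show "z \<in> carrier_vec (Suc d)" unfolding z_def by simp
    show "z \<noteq> 0\<^sub>v (Suc d)"
    proof
      assume "z = 0\<^sub>v (Suc d)"
      then have "z $ Suc i = 0" if "i < d" for i using that by simp
      then have "x$i = 0" if "i < d" for i using that by (simp add: z_def)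
      then show False using x by (metis eq_vecI carrier_vecD index_zero_vec)
    qed
  qed
  have "(\<Sum>i<d. \<Sum>j<d. x$i * schur_complement d S $$ (i,j) * x$j) > 0"
    using schur_complement_quadratic_form[OF _ _ z_def] pos_def_mat_double_sum_pos[OF S(3) z]
      pos_def_mat_corner_pos[OF S(3)] symmetric_mat_index[OF S(2,1)] by simp
  then show "x \<bullet> (schur_complement d S *\<^sub>v x) > 0"
    using quadratic_form_eq_double_sum[OF Sc x(1)] by simp
qed

lemma cholesky_step:
  fixes S U' :: "real mat"
  assumes Sc: "S \<in> carrier_mat (Suc d) (Suc d)" and sym: "transpose_mat S = S"
    and s: "S $$ (0,0) > 0"
    and U': "U' \<in> carrier_mat d d" "upper_triangular U'"
      "schur_complement d S = transpose_mat U' * U'"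
  shows "\<exists>U \<in> carrier_mat (Suc d) (Suc d). upper_triangular U \<and> S = transpose_mat U * U"
proof -
  define s where "s = S $$ (0,0)"
  define U where "U = mat (Suc d) (Suc d) (\<lambda>(i,j).
    if i = 0 then (if j = 0 then sqrt s else S$$(0,j) / sqrt s)
    else if j = 0 then 0 else U'$$(i - 1, j - 1))"
  have Uc: "U \<in> carrier_mat (Suc d) (Suc d)" unfolding U_def by simp
  have "upper_triangular U"
    unfolding upper_triangular_def U_def using U'(1,2) by (auto simp: upper_triangular_def)
  moreover have "S = transpose_mat U * U"
  proof (rule eq_matI)
    fix i j assume "i < dim_row (transpose_mat U * U)" "j < dim_col (transpose_mat U * U)"
    then have i: "i < Suc d" and j: "j < Suc d" using Uc by auto
    have UU: "(transpose_mat U * U) $$ (i,j) =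
        U$$(0,i) * U$$(0,j) + (\<Sum>k<d. U$$(Suc k,i) * U$$(Suc k,j))"
      unfolding transpose_mult_self_index[OF Uc i j] by (simp only: sum.lessThan_Suc_shift)
    have ss: "sqrt s * sqrt s = s" using s by (simp add: s_def)
    consider "i = 0" | i' where "i = Suc i'" "j = 0" | i' j' where "i = Suc i'" "j = Suc j'"
      using i j by (cases i; cases j) auto
    then show "S $$ (i,j) = (transpose_mat U * U) $$ (i,j)"
    proof cases
      case 1
      then show ?thesis using UU j s ss by (cases j) (auto simp: U_def s_def)
    next
      case 2
      then show ?thesis
        using UU i s symmetric_mat_index[OF sym Sc i j] by (simp add: U_def s_def)
    next
      case 3
      have "(\<Sum>k<d. U$$(Suc k,i) * U$$(Suc k,j)) = (\<Sum>k<d. U'$$(k,i') * U'$$(k,j'))"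
        using i j 3 by (auto simp: U_def intro!: sum.cong)
      also have "\<dots> = schur_complement d S $$ (i',j')"
        using U' transpose_mult_self_index[OF U'(1), of i' j'] i j 3 by simp
      also have "\<dots> = S$$(i,j) - S$$(0,i) * S$$(0,j) / s"
        using i j 3 symmetric_mat_index[OF sym Sc, of i 0] by (simp add: schur_complement_def s_def)
      finally show ?thesis using UU i j 3 s by (simp add: U_def s_def field_simps)
    qed
  qed (use Uc Sc in auto)
  ultimately show ?thesis using Uc by blast
qed

lemma cholesky_decomposition:
  fixes S :: "real mat"
  assumes "S \<in> carrier_mat d d" "transpose_mat S = S" "pos_def_mat d S"
  shows "\<exists>U \<in> carrier_mat d d. upper_triangular U \<and> S = transpose_mat U * U"
  using assms
proof (induction d arbitrary: S)
  case 0
  then show ?case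
    by (intro bexI[of _ "1\<^sub>m 0"]) (auto intro!: eq_matI simp: upper_triangular_def)
next
  case (Suc d)
  have "transpose_mat (schur_complement d S) = schur_complement d S"
    using symmetric_mat_index[OF Suc.prems(2,1)]
    by (auto intro!: eq_matI simp: schur_complement_def)
  then obtain U' where "U' \<in> carrier_mat d d" "upper_triangular U'"
    "schur_complement d S = transpose_mat U' * U'"
    using Suc.IH[of "schur_complement d S"] schur_complement_pos_def[OF Suc.prems]
    by (auto simp: schur_complement_def)
  then show ?case
    using cholesky_step[OF Suc.prems(1,2) pos_def_mat_corner_pos[OF Suc.prems(3)]] by blast
qed

section \<open>Positive definite matrices\<close>

lemma pos_def_mat_det_nonzero:
  fixes A :: "real mat"
  assumes "pos_def_mat d A"
  shows "det A \<noteq> 0"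
proof
  assume "det A = 0"
  have Ac: "A \<in> carrier_mat d d" using assms unfolding pos_def_mat_def by auto
  obtain v where v: "v \<in> carrier_vec d" "v \<noteq> 0\<^sub>v d" "A *\<^sub>v v = 0\<^sub>v d"
    using det_0_iff_vec_prod_zero[OF Ac] \<open>det A = 0\<close> by auto
  then have "v \<bullet> (A *\<^sub>v v) = 0" by simp
  with assms v show False unfolding pos_def_mat_def by auto
qed

lemma det_transpose_mult_self:
  fixes U :: "real mat"
  assumes "U \<in> carrier_mat d d"
  shows "det (transpose_mat U * U) = (det U)\<^sup>2"
  using det_mult[of "transpose_mat U" d U] det_transpose[OF assms] assms
  by (simp add: power2_eq_square)

lemma pos_def_mat_det_pos:
  fixes A :: "real mat"
  assumes "A \<in> carrier_mat d d" "transpose_mat A = A" "pos_def_mat d A"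
  shows "det A > 0"
proof -
  obtain U where "U \<in> carrier_mat d d" "A = transpose_mat U * U"
    using cholesky_decomposition[OF assms] by blast
  then have "det A = (det U)\<^sup>2" using det_transpose_mult_self by simp
  then show ?thesis using pos_def_mat_det_nonzero[OF assms(3)] by simp
qed

lemma pos_def_mat_congruence:
  fixes A U :: "real mat"
  assumes A: "pos_def_mat d A" and U: "U \<in> carrier_mat d d" "det U \<noteq> 0"
  shows "pos_def_mat d (U * A * transpose_mat U)"
  unfolding pos_def_mat_def
proof (intro conjI ballI impI)
  have Ac: "A \<in> carrier_mat d d" using A unfolding pos_def_mat_def by simp
  then show "U * A * transpose_mat U \<in> carrier_mat d d" using U by simp
  fix x :: "real vec" assume x: "x \<in> carrier_vec d" "x \<noteq> 0\<^sub>v d"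
  define w where "w = transpose_mat U *\<^sub>v x"
  have UT: "transpose_mat U \<in> carrier_mat d d" "det (transpose_mat U) \<noteq> 0"
    using U det_transpose[OF U(1)] by auto
  have w: "w \<in> carrier_vec d" "w \<noteq> 0\<^sub>v d"
    using det_0_iff_vec_prod_zero[OF UT(1)] UT x unfolding w_def by auto
  have "x \<bullet> (U * A * transpose_mat U *\<^sub>v x) = x \<bullet> (U *\<^sub>v (A *\<^sub>v w))"
    unfolding w_def using U Ac x by (simp add: assoc_mult_mat_vec[of _ d d _ d])
  also have "\<dots> = w \<bullet> (A *\<^sub>v w)"
    using transpose_vec_mult_scalar[OF U(1), of "A *\<^sub>v w" x] Ac w x unfolding w_def by simp
  finally show "x \<bullet> (U * A * transpose_mat U *\<^sub>v x) > 0"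
    using A w unfolding pos_def_mat_def by simp
qed

lemma symmetric_mat_inverse:
  fixes A B :: "real mat"
  assumes A: "A \<in> carrier_mat d d" "transpose_mat A = A" and B: "B \<in> carrier_mat d d"
    and AB: "A * B = 1\<^sub>m d"
  shows "transpose_mat B = B"
proof -
  have "transpose_mat B * A = 1\<^sub>m d"
    using arg_cong[OF AB, of transpose_mat] transpose_mult[OF A(1) B] A(2) by simp
  have "transpose_mat B = transpose_mat B * (A * B)" using AB B by simp
  also have "\<dots> = transpose_mat B * A * B"
    using assoc_mult_mat[of "transpose_mat B" d d A d B d] A B by simp
  also have "\<dots> = B" using \<open>transpose_mat B * A = 1\<^sub>m d\<close> B by simp
  finally show ?thesis .
qed

lemma pos_def_mat_inverse:
  fixes A B :: "real mat"
  assumes A: "transpose_mat A = A" "pos_def_mat d A" and B: "B \<in> carrier_mat d d"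
    and AB: "A * B = 1\<^sub>m d"
  shows "pos_def_mat d B"
proof -
  have Ac: "A \<in> carrier_mat d d" using A unfolding pos_def_mat_def by simp
  have "det A \<noteq> 0" using pos_def_mat_det_nonzero[OF A(2)] .
  have "B * A * transpose_mat B = B * (A * B)"
    using symmetric_mat_inverse[OF Ac A(1) B AB] assoc_mult_mat[OF B Ac B] by simp
  also have "\<dots> = B" using AB B by simp
  finally have "B * A * transpose_mat B = B" .
  moreover have "det B \<noteq> 0" using det_mult[OF Ac B] AB by auto
  ultimately show ?thesis using pos_def_mat_congruence[OF A(2) B] by simp
qed

section \<open>Trace and the determinant--trace inequality\<close>

definition mat_trace :: "'a :: comm_monoid_add mat \<Rightarrow> 'a" where
  "mat_trace A = (\<Sum>i<dim_row A. A $$ (i,i))"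

lemma mat_trace_one [simp]: "mat_trace (1\<^sub>m d :: 'a :: semiring_1 mat) = of_nat d"
  by (simp add: mat_trace_def)

lemma mat_trace_mult_comm:
  fixes A B :: "'a :: comm_semiring_0 mat"
  assumes "A \<in> carrier_mat d e" "B \<in> carrier_mat e d"
  shows "mat_trace (A * B) = mat_trace (B * A)"
proof -
  have "mat_trace (A * B) = (\<Sum>i<d. \<Sum>k<e. A $$ (i,k) * B $$ (k,i))"
    using assms by (auto simp: mat_trace_def scalar_prod_def atLeast0LessThan intro!: sum.cong)
  also have "\<dots> = (\<Sum>k<e. \<Sum>i<d. B $$ (k,i) * A $$ (i,k))"
    by (subst sum.swap) (simp add: mult.commute)
  also have "\<dots> = mat_trace (B * A)"
    using assms by (auto simp: mat_trace_def scalar_prod_def atLeast0LessThan intro!: sum.cong)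
  finally show ?thesis .
qed

lemma mat_trace_mult_symmetric:
  fixes A S :: "real mat"
  assumes "A \<in> carrier_mat d d" "S \<in> carrier_mat d d" "transpose_mat S = S"
  shows "mat_trace (A * S) = (\<Sum>i<d. \<Sum>j<d. A $$ (i,j) * S $$ (i,j))"
  using assms symmetric_mat_index[OF assms(3,2)]
  by (auto simp: mat_trace_def scalar_prod_def atLeast0LessThan intro!: sum.cong)

lemma prod_le_exp_sum_minus_card:
  fixes a b :: "'i \<Rightarrow> real"
  assumes "finite I" and ab: "\<And>i. i \<in> I \<Longrightarrow> 0 < a i \<and> a i \<le> b i"
  shows "(\<Prod>i\<in>I. a i) \<le> exp ((\<Sum>i\<in>I. b i) - card I)"
    and "(\<Prod>i\<in>I. a i) = exp ((\<Sum>i\<in>I. b i) - card I) \<Longrightarrow> \<forall>i\<in>I. a i = 1 \<and> b i = 1"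
proof -
  have ln_le: "ln (a i) \<le> b i - 1" if "i \<in> I" for i
    using ln_le_minus_one[of "a i"] ab[OF that] by linarith
  have prod_pos: "(\<Prod>i\<in>I. a i) > 0" using ab by (simp add: prod_pos)
  have ln_prod: "ln (\<Prod>i\<in>I. a i) = (\<Sum>i\<in>I. ln (a i))"
  proof (rule ln_prod[OF assms(1)])
    show "a i \<noteq> 0" if "i \<in> I" for i using ab[OF that] by simp
  qed
  have sum_b: "(\<Sum>i\<in>I. b i - 1) = (\<Sum>i\<in>I. b i) - card I" by (simp add: sum_subtractf)
  have "ln (\<Prod>i\<in>I. a i) \<le> (\<Sum>i\<in>I. b i) - card I"
    unfolding ln_prod sum_b[symmetric] using ln_le by (rule sum_mono)
  then show "(\<Prod>i\<in>I. a i) \<le> exp ((\<Sum>i\<in>I. b i) - card I)"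
    using exp_ln[OF prod_pos] exp_le_cancel_iff by metis
  assume "(\<Prod>i\<in>I. a i) = exp ((\<Sum>i\<in>I. b i) - card I)"
  then have "(\<Sum>i\<in>I. ln (a i)) = (\<Sum>i\<in>I. b i - 1)" unfolding sum_b ln_prod[symmetric] by simp
  then have "(\<Sum>i\<in>I. (b i - 1) - ln (a i)) = 0" by (simp add: sum_subtractf)
  then have "\<forall>i\<in>I. (b i - 1) - ln (a i) = 0"
    using sum_nonneg_eq_0_iff[OF \<open>finite I\<close>, of "\<lambda>i. (b i - 1) - ln (a i)"] ln_le by simp
  show "\<forall>i\<in>I. a i = 1 \<and> b i = 1"
  proof
    fix i assume i: "i \<in> I"
    have "ln (a i) = a i - 1" "a i = b i"
      using \<open>\<forall>i\<in>I. (b i - 1) - ln (a i) = 0\<close> ln_le_minus_one[of "a i"] ab[OF i] i by auto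
    then show "a i = 1 \<and> b i = 1" using ln_eq_minus_one[of "a i"] ab[OF i] by simp
  qed
qed

lemma transpose_mult_self_eq_one:
  fixes K :: "real mat"
  assumes K: "K \<in> carrier_mat d d"
    and diag: "\<And>i. i < d \<Longrightarrow> (K$$(i,i))\<^sup>2 = 1"
    and col: "\<And>i. i < d \<Longrightarrow> (\<Sum>k<d. (K$$(k,i))\<^sup>2) = 1"
  shows "transpose_mat K * K = 1\<^sub>m d"
proof (rule eq_matI)
  have off_diag: "K$$(k,i) = 0" if "i < d" "k < d" "k \<noteq> i" for i k
  proof -
    have "(\<Sum>k\<in>{..<d}-{i}. (K$$(k,i))\<^sup>2) = 0"
      using col[OF \<open>i < d\<close>] diag[OF \<open>i < d\<close>] \<open>i < d\<close> by (simp add: sum.remove)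
    then show ?thesis using that by (simp add: sum_nonneg_eq_0_iff)
  qed
  fix i j assume "i < dim_row (1\<^sub>m d :: real mat)" "j < dim_col (1\<^sub>m d :: real mat)"
  then have i: "i < d" and j: "j < d" by auto
  have "(transpose_mat K * K) $$ (i,j) = (\<Sum>k<d. K$$(k,i) * K$$(k,j))"
    by (rule transpose_mult_self_index[OF K i j])
  also have "\<dots> = 1\<^sub>m d $$ (i,j)"
  proof (cases "i = j")
    case True then show ?thesis using col[OF i] i by (simp add: power2_eq_square)
  next
    case False
    have "(\<Sum>k<d. K$$(k,i) * K$$(k,j)) = 0" using off_diag i j False by (intro sum.neutral) auto
    then show ?thesis using False i j by simp
  qed
  finally show "(transpose_mat K * K) $$ (i,j) = 1\<^sub>m d $$ (i,j)" .
qed (use K in auto)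

text \<open>Writing X = K^T K with K upper triangular, det X is the product of the squared diagonal
  entries of K and trace X the sum of all squared entries, so this is ln t \<le> t - 1 applied to
  the diagonal.\<close>
lemma det_le_exp_trace:
  fixes X :: "real mat"
  assumes X: "X \<in> carrier_mat d d" "transpose_mat X = X" "pos_def_mat d X"
  shows "det X \<le> exp (mat_trace X - d)"
    and "det X = exp (mat_trace X - d) \<Longrightarrow> X = 1\<^sub>m d"
proof -
  obtain K where K: "K \<in> carrier_mat d d" "upper_triangular K" and XK: "X = transpose_mat K * K"
    using cholesky_decomposition[OF X] by blast
  have detK: "det K = (\<Prod>i<d. K$$(i,i))"
    using det_upper_triangular[OF K(2,1)] K(1)
    by (simp add: diag_mat_def prod.distinct_set_conv_list[symmetric] atLeast0LessThan)
  have det: "det X = (\<Prod>i<d. (K$$(i,i))\<^sup>2)"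
    unfolding XK det_transpose_mult_self[OF K(1)] detK by (simp add: prod_power_distrib)
  have diag: "X $$ (i,i) = (\<Sum>k<d. (K$$(k,i))\<^sup>2)" if "i < d" for i
    unfolding XK transpose_mult_self_index[OF K(1) that that] by (simp add: power2_eq_square)
  have trace: "mat_trace X = (\<Sum>i<d. X $$ (i,i))" using X(1) by (simp add: mat_trace_def)
  have "det X \<noteq> 0" using pos_def_mat_det_nonzero[OF X(3)] .
  then have ab: "0 < (K$$(i,i))\<^sup>2 \<and> (K$$(i,i))\<^sup>2 \<le> X $$ (i,i)" if "i \<in> {..<d}" for i
    using that prod_zero_iff[of "{..<d}" "\<lambda>i. (K$$(i,i))\<^sup>2"]
    unfolding det diag[OF that[unfolded lessThan_iff]] by (auto intro: member_le_sum[of i "{..<d}"])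
  have "(\<Prod>i<d. (K$$(i,i))\<^sup>2) \<le> exp ((\<Sum>i<d. X $$ (i,i)) - card {..<d})"
    by (rule prod_le_exp_sum_minus_card(1)) (simp, rule ab)
  then show "det X \<le> exp (mat_trace X - d)" by (simp add: det trace)
  assume "det X = exp (mat_trace X - d)"
  then have "(\<Prod>i<d. (K$$(i,i))\<^sup>2) = exp ((\<Sum>i<d. X $$ (i,i)) - card {..<d})"
    by (simp add: det trace)
  then have "\<forall>i\<in>{..<d}. (K$$(i,i))\<^sup>2 = 1 \<and> X $$ (i,i) = 1"
    by (intro prod_le_exp_sum_minus_card(2)[OF _ ab]) simp_all
  then have "(K$$(i,i))\<^sup>2 = 1" "(\<Sum>k<d. (K$$(k,i))\<^sup>2) = 1" if "i < d" for i
    using that diag[OF that] by auto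
  then show "X = 1\<^sub>m d" unfolding XK by (rule transpose_mult_self_eq_one[OF K(1)])
qed

lemma det_mult_le_exp_trace:
  fixes A S :: "real mat"
  assumes A: "A \<in> carrier_mat d d" "transpose_mat A = A" "pos_def_mat d A"
    and S: "S \<in> carrier_mat d d" "transpose_mat S = S" "pos_def_mat d S"
  shows "det A * det S \<le> exp (mat_trace (A * S) - d)"
    and "det A * det S = exp (mat_trace (A * S) - d) \<Longrightarrow> A * S = 1\<^sub>m d"
proof -
  obtain U where U: "U \<in> carrier_mat d d" and SU: "S = transpose_mat U * U"
    using cholesky_decomposition[OF S] by blast
  have UT: "transpose_mat U \<in> carrier_mat d d" using U by simp
  have "det U \<noteq> 0"
    using pos_def_mat_det_nonzero[OF S(3)] det_transpose_mult_self[OF U] SU by auto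
  define X where "X = U * A * transpose_mat U"
  have Xc: "X \<in> carrier_mat d d" unfolding X_def using U A by auto
  have "transpose_mat X = transpose_mat (transpose_mat U) * transpose_mat (U * A)"
    unfolding X_def using U A by (intro transpose_mult[of "U * A" d d "transpose_mat U" d]) auto
  also have "transpose_mat (U * A) = A * transpose_mat U"
    using transpose_mult[OF U A(1)] A(2) by simp
  also have "transpose_mat (transpose_mat U) * (A * transpose_mat U) = X"
    unfolding X_def using assoc_mult_mat[OF U A(1) UT] by simp
  finally have X: "transpose_mat X = X" "pos_def_mat d X"
    using pos_def_mat_congruence[OF A(3) U \<open>det U \<noteq> 0\<close>] unfolding X_def by auto
  have "det X = det U * det A * det U"
    unfolding X_def using det_mult[of "U * A" d "transpose_mat U"] det_mult[OF U A(1)]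
      det_transpose[OF U] U A by simp
  also have "\<dots> = det A * det S"
    unfolding SU det_transpose_mult_self[OF U] by (simp add: power2_eq_square)
  finally have det: "det X = det A * det S" .
  have "mat_trace X = mat_trace (transpose_mat U * (U * A))"
    unfolding X_def using U A by (intro mat_trace_mult_comm) auto
  also have "\<dots> = mat_trace (S * A)" unfolding SU using assoc_mult_mat[OF UT U A(1)] by simp
  also have "\<dots> = mat_trace (A * S)" using mat_trace_mult_comm[OF S(1) A(1)] .
  finally have trace: "mat_trace X = mat_trace (A * S)" .
  show "det A * det S \<le> exp (mat_trace (A * S) - d)"
    using det_le_exp_trace(1)[OF Xc X] by (simp add: det trace)
  assume "det A * det S = exp (mat_trace (A * S) - d)"
  then have "X = 1\<^sub>m d" using det_le_exp_trace(2)[OF Xc X] by (simp add: det trace)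
  then have "U * (A * transpose_mat U) = 1\<^sub>m d"
    unfolding X_def using assoc_mult_mat[OF U A(1) UT] by simp
  then have "A * transpose_mat U * U = 1\<^sub>m d"
    using mat_mult_left_right_inverse[OF U, of "A * transpose_mat U"] U A by simp
  then show "A * S = 1\<^sub>m d" unfolding SU using assoc_mult_mat[OF A(1) UT U] by simp
qed

lemma det_exp_trace_max_at_inverse:
  fixes A S P :: "real mat"
  assumes A: "A \<in> carrier_mat d d" "transpose_mat A = A" "pos_def_mat d A"
    and S: "S \<in> carrier_mat d d" "transpose_mat S = S" "pos_def_mat d S"
    and P: "P \<in> carrier_mat d d" and SP: "S * P = 1\<^sub>m d"
  shows "det A * exp (- mat_trace (A * S)) \<le> det P * exp (- mat_trace (P * S))"
    and "det A * exp (- mat_trace (A * S)) = det P * exp (- mat_trace (P * S)) \<Longrightarrow> A = P"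
proof -
  have PS: "P * S = 1\<^sub>m d" using mat_mult_left_right_inverse[OF S(1) P SP] .
  have detS: "det S > 0" using pos_def_mat_det_pos[OF S] .
  have max: "det P * exp (- mat_trace (P * S)) * det S = exp (- d)"
    using det_mult[OF P S(1)] PS by simp
  have A_scaled: "det A * exp (- mat_trace (A * S)) * det S
      = det A * det S * exp (- mat_trace (A * S))" by simp
  have "det A * det S * exp (- mat_trace (A * S))
      \<le> exp (mat_trace (A * S) - d) * exp (- mat_trace (A * S))"
    using det_mult_le_exp_trace(1)[OF A S] by (intro mult_right_mono) auto
  also have "\<dots> = exp (- d)" by (simp add: exp_add[symmetric])
  finally show "det A * exp (- mat_trace (A * S)) \<le> det P * exp (- mat_trace (P * S))"
    using detS unfolding max[symmetric] A_scaled by simp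
  assume "det A * exp (- mat_trace (A * S)) = det P * exp (- mat_trace (P * S))"
  then have "det A * det S * exp (- mat_trace (A * S))
      = exp (mat_trace (A * S) - d) * exp (- mat_trace (A * S))"
    using max A_scaled by (simp add: exp_add[symmetric])
  then have "A * S = 1\<^sub>m d" using det_mult_le_exp_trace(2)[OF A S] by simp
  have "A = A * (S * P)" using A SP by simp
  also have "\<dots> = A * S * P" using assoc_mult_mat[OF A(1) S(1) P] by simp
  finally show "A = P" using \<open>A * S = 1\<^sub>m d\<close> P by simp
qed

section \<open>Block-circulant matrices\<close>

lemma block_index:
  fixes x a m N :: nat
  assumes "x < N" "a < m"
  shows "x*m + a < m*N" "(x*m + a) div m = x" "(x*m + a) mod m = a"
proof -
  have "x*m + a < (x + 1)*m" using assms by simp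
  also have "\<dots> \<le> N*m" using assms(1) by (intro mult_le_mono1) simp
  finally show "x*m + a < m*N" by (simp add: mult.commute)
  show "(x*m + a) div m = x" "(x*m + a) mod m = a" using assms by auto
qed

lemma sum_lessThan_blocks:
  fixes f :: "nat \<Rightarrow> 'a::comm_monoid_add"
  shows "(\<Sum>r<m*N. f r) = (\<Sum>i<N. \<Sum>a<m. f (i*m + a))"
proof (induction N)
  case (Suc N)
  have "{..<m * Suc N} = {..<m*N} \<union> {m*N..<m*N + m}" by auto
  then have "(\<Sum>r<m * Suc N. f r) = (\<Sum>r<m*N. f r) + (\<Sum>r\<in>{m*N..<m*N + m}. f r)"
    by (simp add: sum.union_disjoint ivl_disj_int)
  also have "(\<Sum>r\<in>{m*N..<m*N + m}. f r) = (\<Sum>a<m. f (N*m + a))"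
    by (subst sum.atLeastLessThan_shift_0) (simp add: atLeast0LessThan mult.commute add.commute)
  finally show ?case using Suc by simp
qed simp

lemma add_mod_diff_mod:
  fixes j k N :: nat
  assumes "k < N" "j < N"
  shows "((j + k) mod N + N - j) mod N = k"
proof -
  have "((j + k) mod N + N - j) mod N = ((j + k) mod N + (N - j)) mod N" using assms by simp
  also have "\<dots> = (j + k + (N - j)) mod N" by (simp add: mod_add_left_eq)
  also have "j + k + (N - j) = k + N" using assms by simp
  finally show ?thesis using assms by simp
qed

lemma sum_mod_shift:
  fixes g :: "nat \<Rightarrow> 'a::comm_monoid_add"
  assumes "k < N"
  shows "(\<Sum>j<N. g ((j + k) mod N)) = (\<Sum>j<N. g j)"
proof (rule sum.reindex_bij_witness[where i="\<lambda>t. (t + N - k) mod N" and j="\<lambda>j. (j + k) mod N"])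
  fix t assume t: "t \<in> {..<N}"
  have "((t + N - k) mod N + k) mod N = (t + N - k + k) mod N" by (simp add: mod_add_left_eq)
  then show "((t + N - k) mod N + k) mod N = t" using assms t by simp
next
  fix j assume "j \<in> {..<N}"
  then show "((j + k) mod N + N - k) mod N = j"
    using add_mod_diff_mod[where j=k and k=j] assms by (simp add: add.commute)
qed (use assms in auto)

lemma int_diff_mod_eq:
  fixes i j N :: nat
  assumes "i < N" "j < N"
  shows "(int i - int j) mod int N = int ((i + N - j) mod N)"
proof -
  have "int ((i + N - j) mod N) = int (i + N - j) mod int N" by (simp add: zmod_int)
  also have "int (i + N - j) = (int i - int j) + int N" using assms by simp
  finally show ?thesis by simp
qed

lemma recip_mat_index:
  assumes "r < m*N" "c < m*N"
  shows "recip_mat m N n M $$ (r,c) =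
    (if (r div m + N - c div m) mod N \<le> n
     then M ((r div m + N - c div m) mod N) $$ (r mod m, c mod m)
     else if (c div m + N - r div m) mod N \<le> n
     then M ((c div m + N - r div m) mod N) $$ (c mod m, r mod m)
     else 0)"
proof -
  have m: "m > 0" using assms by (cases m) auto
  have "r div m < N" "c div m < N"
    using assms m by (simp_all add: less_mult_imp_div_less mult.commute)
  then show ?thesis
    unfolding recip_mat_def using assms int_diff_mod_eq by (simp add: Let_def)
qed

lemma block_circulant_recip_mat:
  assumes m: "m > 0"
  shows "block_circulant m N (block_of m (recip_mat m N n M)) (recip_mat m N n M)"
  unfolding block_circulant_def
proof (intro conjI allI impI)
  show "recip_mat m N n M \<in> carrier_mat (m*N) (m*N)" by (simp add: recip_mat_def)
  fix r c assume r: "r < m*N" and c: "c < m*N"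
  have N: "N > 0" using r by (cases N) auto
  define i j where "i = r div m" and "j = c div m"
  define k where "k = (i + N - j) mod N"
  have ij: "i < N" "j < N"
    unfolding i_def j_def using r c m by (simp_all add: less_mult_imp_div_less mult.commute)
  have k: "k < N" unfolding k_def using N by simp
  have ab: "r mod m < m" "c mod m < m" using m by auto
  have "(N - k) mod N = (j + N - i) mod N"
  proof -
    have "int ((N - k) mod N) = int ((0 + N - k) mod N)" by simp
    also have "\<dots> = (int 0 - int k) mod int N" using int_diff_mod_eq[OF N k] by simp
    also have "\<dots> = (- ((int i - int j) mod int N)) mod int N"
      unfolding k_def int_diff_mod_eq[OF ij] by simp
    also have "\<dots> = (int j - int i) mod int N" by (simp add: mod_minus_eq)
    also have "\<dots> = int ((j + N - i) mod N)" using int_diff_mod_eq[OF ij(2,1)] .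
    finally show ?thesis by simp
  qed
  then show "recip_mat m N n M $$ (r,c) =
      block_of m (recip_mat m N n M) ((r div m + N - c div m) mod N) $$ (r mod m, c mod m)"
    using block_index[OF k ab(1)] block_index[OF N ab(2)] recip_mat_index[OF r c]
      recip_mat_index[of "k*m + r mod m" m N "c mod m"] k
    by (simp add: block_of_def ab i_def[symmetric] j_def[symmetric] k_def[symmetric])
qed

lemma block_circulant_index:
  assumes "block_circulant m N F A" "i < N" "j < N" "a < m" "b < m"
  shows "A $$ (i*m + a, j*m + b) = F ((i + N - j) mod N) $$ (a,b)"
  using assms block_index[of i N a m] block_index[of j N b m] unfolding block_circulant_def by simp

lemma block_circulant_pairing:
  fixes A :: "real mat" and H :: "nat \<Rightarrow> nat \<Rightarrow> real"
  assumes A: "block_circulant m N F A"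
  shows "(\<Sum>r<m*N. \<Sum>c<m*N. A$$(r,c) * H r c) =
     (\<Sum>k<N. \<Sum>a<m. \<Sum>b<m. F k $$ (a,b) * (\<Sum>j<N. H (((j + k) mod N)*m + a) (j*m + b)))"
proof -
  define G where "G i j = (\<Sum>a<m. \<Sum>b<m. F ((i + N - j) mod N) $$ (a,b) * H (i*m + a) (j*m + b))"
    for i j
  have "(\<Sum>r<m*N. \<Sum>c<m*N. A$$(r,c) * H r c) =
      (\<Sum>i<N. \<Sum>a<m. \<Sum>j<N. \<Sum>b<m. F ((i + N - j) mod N) $$ (a,b) * H (i*m + a) (j*m + b))"
    unfolding sum_lessThan_blocks[of _ m N] using block_circulant_index[OF A] by simp
  also have "\<dots> = (\<Sum>i<N. \<Sum>j<N. G i j)"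
    unfolding G_def by (rule sum.cong[OF refl], rule sum.swap)
  also have "\<dots> = (\<Sum>j<N. \<Sum>i<N. G i j)" by (rule sum.swap)
  also have "\<dots> = (\<Sum>j<N. \<Sum>k<N. G ((j + k) mod N) j)"
    by (rule sum.cong[OF refl], subst add.commute, rule sum_mod_shift[symmetric]) simp
  also have "\<dots> = (\<Sum>j<N. \<Sum>k<N. \<Sum>a<m. \<Sum>b<m. F k $$ (a,b) * H (((j + k) mod N)*m + a) (j*m + b))"
    by (intro sum.cong refl) (simp only: G_def add_mod_diff_mod lessThan_iff)
  also have "\<dots> = (\<Sum>k<N. \<Sum>j<N. \<Sum>a<m. \<Sum>b<m. F k $$ (a,b) * H (((j + k) mod N)*m + a) (j*m + b))"
    by (rule sum.swap)
  also have "\<dots> = (\<Sum>k<N. \<Sum>a<m. \<Sum>b<m. \<Sum>j<N. F k $$ (a,b) * H (((j + k) mod N)*m + a) (j*m + b))"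
    by (rule sum.cong[OF refl], subst sum.swap, rule sum.cong[OF refl], rule sum.swap)
  finally show ?thesis by (simp add: sum_distrib_left)
qed

lemma block_of_recip_mat:
  assumes "k \<le> n" "n < N" "M k \<in> carrier_mat m m"
  shows "block_of m (recip_mat m N n M) k = M k"
proof (rule eq_matI)
  fix a b assume "a < dim_row (M k)" "b < dim_col (M k)"
  then have ab: "a < m" "b < m" using assms(3) by auto
  have kN: "k < N" "0 < N" using assms by auto
  show "block_of m (recip_mat m N n M) k $$ (a,b) = M k $$ (a,b)"
    using block_index[OF kN(1) ab(1)] block_index[OF kN(2) ab(2)] ab assms
      recip_mat_index[of "k*m + a" m N b n M]
    by (simp add: block_of_def)
qed (use assms(3) in \<open>auto simp: block_of_def\<close>)

lemma block_of_recip_mat_eq: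
  assumes "n < N" "admissible m N n M" "\<forall>k>n. M k = 0\<^sub>m m m"
  shows "(\<lambda>k. if k \<le> n then block_of m (recip_mat m N n M) k else 0\<^sub>m m m) = M"
proof
  fix k show "(if k \<le> n then block_of m (recip_mat m N n M) k else 0\<^sub>m m m) = M k"
    using assms block_of_recip_mat[of k n N M m] unfolding admissible_def by (cases "k \<le> n") auto
qed

lemma recip_mat_symmetric:
  assumes N: "N > 2*n" and M0: "M 0 \<in> carrier_mat m m" "transpose_mat (M 0) = M 0"
  shows "transpose_mat (recip_mat m N n M) = recip_mat m N n M"
proof (rule eq_matI)
  fix r c assume "r < dim_row (recip_mat m N n M)" "c < dim_col (recip_mat m N n M)"
  then have r: "r < m*N" and c: "c < m*N" by (auto simp: recip_mat_def)
  have m: "m > 0" using r by (cases m) auto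
  define k1 k2 where "k1 = (r div m + N - c div m) mod N" and "k2 = (c div m + N - r div m) mod N"
  have "c div m < N" "r div m < N"
    using r c m by (simp_all add: less_mult_imp_div_less mult.commute)
  then have k12: "k1 = 0 \<longleftrightarrow> k2 = 0" "k1 \<noteq> 0 \<Longrightarrow> k1 + k2 = N"
    unfolding k1_def k2_def using N by (auto simp: mod_if)
  have "M 0 $$ (r mod m, c mod m) = M 0 $$ (c mod m, r mod m)"
    using symmetric_mat_index[OF M0(2,1)] m by simp
  then show "transpose_mat (recip_mat m N n M) $$ (r,c) = recip_mat m N n M $$ (r,c)"
    using recip_mat_index[OF r c] recip_mat_index[OF c r] k12 N r c
    unfolding k1_def[symmetric] k2_def[symmetric] by (auto simp: recip_mat_def)
qed (auto simp: recip_mat_def)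

lemma recip_mat_block_of:
  fixes P :: "real mat"
  assumes N0: "N > 0" and P: "P \<in> carrier_mat (m*N) (m*N)" "transpose_mat P = P"
    and circ: "block_circulant m N Q P" and band: "banded m N n P"
  shows "recip_mat m N n (\<lambda>k. if k \<le> n then block_of m P k else 0\<^sub>m m m) = P"
proof (rule eq_matI)
  fix r c assume "r < dim_row P" "c < dim_col P"
  then have r: "r < m*N" and c: "c < m*N" using P by auto
  have m: "m > 0" using r by (cases m) auto
  define k1 k2 where "k1 = (r div m + N - c div m) mod N" and "k2 = (c div m + N - r div m) mod N"
  have k: "k1 < N" "k2 < N" unfolding k1_def k2_def using N0 by auto
  have ab: "r mod m < m" "c mod m < m" using m by auto
  have block: "block_of m P k $$ (a,b) = Q k $$ (a,b)" if "k < N" "a < m" "b < m" for k a b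
    using block_index[OF that(1,2)] block_index[OF N0 that(3)] that circ
    unfolding block_of_def block_circulant_def by auto
  have "P $$ (r,c) = Q k1 $$ (r mod m, c mod m)" "P $$ (c,r) = Q k2 $$ (c mod m, r mod m)"
    using circ r c unfolding block_circulant_def k1_def k2_def by auto
  moreover have "P $$ (r,c) = P $$ (c,r)" using symmetric_mat_index[OF P(2,1) r c] .
  moreover have "k1 > n \<Longrightarrow> k2 > n \<Longrightarrow> P $$ (r,c) = 0"
    using band r c unfolding banded_def cyc_dist_def k1_def k2_def by auto
  ultimately show "recip_mat m N n (\<lambda>k. if k \<le> n then block_of m P k else 0\<^sub>m m m) $$ (r,c)
      = P $$ (r,c)"
    using recip_mat_index[OF r c] block[OF k(1) ab] block[OF k(2) ab(2,1)]
    unfolding k1_def[symmetric] k2_def[symmetric] by auto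
qed (use P in \<open>auto simp: recip_mat_def\<close>)

section \<open>Sample covariances and the likelihood\<close>

lemma sum_quadratic_forms:
  fixes A :: "real mat"
  assumes A: "A \<in> carrier_mat d d" and y: "\<And>t. t < T \<Longrightarrow> y t \<in> carrier_vec d"
  shows "(\<Sum>t<T. y t \<bullet> (A *\<^sub>v y t)) = (\<Sum>r<d. \<Sum>c<d. A$$(r,c) * (\<Sum>t<T. y t $ r * y t $ c))"
proof -
  have "(\<Sum>t<T. y t \<bullet> (A *\<^sub>v y t)) = (\<Sum>t<T. \<Sum>r<d. \<Sum>c<d. y t $ r * A$$(r,c) * y t $ c)"
    using quadratic_form_eq_double_sum[OF A y] by simp
  also have "\<dots> = (\<Sum>r<d. \<Sum>t<T. \<Sum>c<d. y t $ r * A$$(r,c) * y t $ c)" by (rule sum.swap)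
  also have "\<dots> = (\<Sum>r<d. \<Sum>c<d. \<Sum>t<T. y t $ r * A$$(r,c) * y t $ c)"
    by (rule sum.cong[OF refl], rule sum.swap)
  finally show ?thesis by (simp add: sum_distrib_left mult_ac)
qed

lemma block_circulant_diagonal_sum:
  fixes A :: "real mat"
  assumes "block_circulant m N S A" "k < N" "a < m" "b < m"
  shows "(\<Sum>j<N. A$$(((j + k) mod N)*m + a, j*m + b)) = real N * S k $$ (a,b)"
proof -
  have "A$$(((j + k) mod N)*m + a, j*m + b) = S k $$ (a,b)" if "j < N" for j
  proof -
    have "(j + k) mod N < N" using that by simp
    from block_circulant_index[OF assms(1) this that assms(3,4)] show ?thesis
      using add_mod_diff_mod[OF assms(2) that] by simp
  qed
  then show ?thesis by simp
qed

lemma sample_cov_eq_sum: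
  assumes "N > 0" "T > 0" "a < m" "b < m"
  shows "(\<Sum>j<N. \<Sum>t<T. y t $ (((j + k) mod N)*m + a) * y t $ (j*m + b))
    = real N * real T * sample_cov m N T y k $$ (a,b)"
proof -
  have "real N * real T * sample_cov m N T y k $$ (a,b)
      = (\<Sum>t<T. \<Sum>j<N. y t $ (((j + k) mod N)*m + a) * y t $ (j*m + b))"
    unfolding sample_cov_def using assms by simp
  moreover have "(\<Sum>j<N. \<Sum>t<T. y t $ (((j + k) mod N)*m + a) * y t $ (j*m + b))
      = (\<Sum>t<T. \<Sum>j<N. y t $ (((j + k) mod N)*m + a) * y t $ (j*m + b))"
    by (rule sum.swap)
  ultimately show ?thesis by simp
qed

lemma sample_cov_reflect:
  assumes "k < N" "a < m" "b < m"
  shows "sample_cov m N T y (N - k) $$ (b,a) = sample_cov m N T y k $$ (a,b)"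
proof -
  have "(\<Sum>j<N. y t $ (((j + (N - k)) mod N)*m + b) * y t $ (j*m + a)) =
        (\<Sum>j<N. y t $ (((j + k) mod N)*m + a) * y t $ (j*m + b))" for t
  proof -
    have shift: "((j + k) mod N + (N - k)) mod N = j" if "j < N" for j
    proof -
      have "(j + k) mod N + (N - k) = (k + j) mod N + N - k"
        using assms(1) by (simp add: add.commute)
      then show ?thesis using add_mod_diff_mod[OF that assms(1)] by simp
    qed
    have "(\<Sum>j<N. y t $ (((j + (N - k)) mod N)*m + b) * y t $ (j*m + a)) =
        (\<Sum>j<N. y t $ ((((j + k) mod N + (N - k)) mod N)*m + b) * y t $ (((j + k) mod N)*m + a))"
      by (rule sum_mod_shift[OF assms(1), symmetric])
    also have "\<dots> = (\<Sum>j<N. y t $ (((j + k) mod N)*m + a) * y t $ (j*m + b))"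
      using shift by (simp add: mult.commute)
    finally show ?thesis .
  qed
  then show ?thesis unfolding sample_cov_def using assms by simp
qed

text \<open>A block of M_N at a lag k > n can only be nonzero when N - k \<le> n; then the symmetry of
  Sig and the reflection of the sample covariances take the lag N - k back to k.\<close>
lemma sample_cov_eq_on_support:
  fixes Sig :: "real mat"
  assumes circ: "block_circulant m N S Sig" and sym: "transpose_mat Sig = Sig"
    and S: "\<And>k. k \<le> n \<Longrightarrow> S k = sample_cov m N T y k"
    and k: "k < N" and ab: "a < m" "b < m"
    and nonzero: "recip_mat m N n M $$ (k*m + a, b) \<noteq> 0"
  shows "sample_cov m N T y k $$ (a,b) = S k $$ (a,b)"
proof (cases "k \<le> n")
  case False
  have N0: "N > 0" using k by simp
  have idx: "k*m + a < m*N" "(k*m + a) div m = k" "(k*m + a) mod m = a"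
    "b < m*N" "b div m = 0" "b mod m = b"
    using block_index[OF k ab(1)] block_index[OF N0 ab(2)] by auto
  have "N - k \<le> n"
    using nonzero recip_mat_index[OF idx(1,4)] False k by (simp add: idx split: if_split_asm)
  have Sig_c: "Sig \<in> carrier_mat (m*N) (m*N)" using circ unfolding block_circulant_def by simp
  have "S k $$ (a,b) = Sig $$ (k*m + a, b)"
    using circ idx k unfolding block_circulant_def by auto
  also have "\<dots> = Sig $$ (b, k*m + a)" using symmetric_mat_index[OF sym Sig_c idx(1,4)] .
  also have "\<dots> = S (N - k) $$ (b,a)"
    using circ idx k False unfolding block_circulant_def by auto
  also have "\<dots> = sample_cov m N T y k $$ (a,b)"
    using S[OF \<open>N - k \<le> n\<close>] sample_cov_reflect[OF k ab] by simp
  finally show ?thesis ..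
qed (use S in simp)

lemma sum_quadratic_forms_recip_mat:
  fixes Sig :: "real mat"
  assumes m: "m > 0" and N0: "N > 0" and T: "T > 0"
    and y: "\<And>t. t < T \<Longrightarrow> y t \<in> carrier_vec (m*N)"
    and circ: "block_circulant m N S Sig" and sym: "transpose_mat Sig = Sig"
    and S: "\<And>k. k \<le> n \<Longrightarrow> S k = sample_cov m N T y k"
  shows "(\<Sum>t<T. y t \<bullet> (recip_mat m N n M *\<^sub>v y t)) = real T * mat_trace (recip_mat m N n M * Sig)"
proof -
  define A where "A = recip_mat m N n M"
  define F where "F = block_of m A"
  have A: "A \<in> carrier_mat (m*N) (m*N)" unfolding A_def recip_mat_def by simp
  have A_circ: "block_circulant m N F A"
    unfolding F_def A_def by (rule block_circulant_recip_mat[OF m])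
  have F: "F k $$ (a,b) = A $$ (k*m + a, b)" if "a < m" "b < m" for k a b
    using that by (simp add: F_def block_of_def)
  have "(\<Sum>t<T. y t \<bullet> (A *\<^sub>v y t)) = (\<Sum>r<m*N. \<Sum>c<m*N. A$$(r,c) * (\<Sum>t<T. y t $ r * y t $ c))"
    by (rule sum_quadratic_forms[OF A y])
  also have "\<dots> = (\<Sum>k<N. \<Sum>a<m. \<Sum>b<m. F k $$ (a,b) *
      (\<Sum>j<N. \<Sum>t<T. y t $ (((j + k) mod N)*m + a) * y t $ (j*m + b)))"
    by (rule block_circulant_pairing[OF A_circ])
  also have "\<dots> = (\<Sum>k<N. \<Sum>a<m. \<Sum>b<m. real T * (F k $$ (a,b) * (real N * S k $$ (a,b))))"
  proof (intro sum.cong refl)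
    fix k a b assume "k \<in> {..<N}" "a \<in> {..<m}" "b \<in> {..<m}"
    then have kab: "k < N" "a < m" "b < m" by auto
    show "F k $$ (a,b) * (\<Sum>j<N. \<Sum>t<T. y t $ (((j + k) mod N)*m + a) * y t $ (j*m + b))
        = real T * (F k $$ (a,b) * (real N * S k $$ (a,b)))"
    proof (cases "F k $$ (a,b) = 0")
      case False
      then have "sample_cov m N T y k $$ (a,b) = S k $$ (a,b)"
        using sample_cov_eq_on_support[OF circ sym S kab] F[OF kab(2,3)] unfolding A_def by simp
      then show ?thesis using sample_cov_eq_sum[OF N0 T kab(2,3)] by simp
    qed simp
  qed
  also have "\<dots> = real T * (\<Sum>k<N. \<Sum>a<m. \<Sum>b<m. F k $$ (a,b) *
      (\<Sum>j<N. Sig$$(((j + k) mod N)*m + a, j*m + b)))"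
    using block_circulant_diagonal_sum[OF circ] by (simp add: sum_distrib_left)
  also have "\<dots> = real T * (\<Sum>r<m*N. \<Sum>c<m*N. A$$(r,c) * Sig$$(r,c))"
    by (simp only: block_circulant_pairing[OF A_circ])
  also have "\<dots> = real T * mat_trace (A * Sig)"
    using mat_trace_mult_symmetric[OF A _ sym] circ unfolding block_circulant_def by simp
  finally show ?thesis unfolding A_def .
qed

lemma likelihood_eq:
  assumes "(\<Sum>t<T. y t \<bullet> (recip_mat m N n M *\<^sub>v y t)) = real T * \<tau>"
  shows "likelihood m N n T y M =
     ((2 * pi) powr (- real (m*N) / 2) * sqrt (det (recip_mat m N n M) * exp (- \<tau>))) ^ T"
proof -
  define A where "A = recip_mat m N n M"
  define c where "c = (2 * pi) powr (- real (m*N) / 2)"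
  have "likelihood m N n T y M = (\<Prod>t<T. (c * sqrt (det A)) * exp (- (1/2) * (y t \<bullet> (A *\<^sub>v y t))))"
    unfolding likelihood_def gauss_density_def A_def c_def by simp
  also have "\<dots> = (c * sqrt (det A)) ^ T * exp (- (1/2) * (\<Sum>t<T. y t \<bullet> (A *\<^sub>v y t)))"
    by (simp add: prod.distrib exp_sum sum_distrib_left)
  also have "exp (- (1/2) * (\<Sum>t<T. y t \<bullet> (A *\<^sub>v y t))) = exp (- \<tau> / 2) ^ T"
    using assms unfolding A_def by (simp add: exp_of_nat_mult[symmetric])
  also have "exp (- \<tau> / 2) = sqrt (exp (- \<tau>))"
    by (rule real_sqrt_unique[symmetric]) (auto simp: power2_eq_square exp_add[symmetric])
  finally show ?thesis
    unfolding A_def c_def by (simp add: power_mult_distrib real_sqrt_mult mult_ac)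
qed

lemma power_mult_sqrt_le_iff:
  fixes c x y :: real
  assumes "c > 0" "T > 0" "x \<ge> 0" "y \<ge> 0"
  shows "(c * sqrt x) ^ T \<le> (c * sqrt y) ^ T \<longleftrightarrow> x \<le> y"
  using assms power_mono_iff[of "c * sqrt x" "c * sqrt y" T] by simp

lemma admissible_recip_mat:
  assumes "admissible m N n M" "N > 2*n"
  shows "recip_mat m N n M \<in> carrier_mat (m*N) (m*N)"
    and "transpose_mat (recip_mat m N n M) = recip_mat m N n M"
    and "pos_def_mat (m*N) (recip_mat m N n M)"
proof -
  have M0: "M 0 \<in> carrier_mat m m" "transpose_mat (M 0) = M 0"
    using assms(1) unfolding admissible_def by auto
  show "recip_mat m N n M \<in> carrier_mat (m*N) (m*N)" by (simp add: recip_mat_def)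
  show "transpose_mat (recip_mat m N n M) = recip_mat m N n M"
    by (rule recip_mat_symmetric[where M=M, OF assms(2) M0])
  show "pos_def_mat (m*N) (recip_mat m N n M)" using assms(1) unfolding admissible_def by simp
qed

lemma admissible_block_of:
  fixes P :: "real mat"
  assumes N: "N > 2*n" and P: "transpose_mat P = P" "pos_def_mat (m*N) P"
    and circ: "block_circulant m N Q P" and band: "banded m N n P"
  shows "admissible m N n (\<lambda>k. if k \<le> n then block_of m P k else 0\<^sub>m m m)"
  unfolding admissible_def
proof (intro conjI allI impI)
  have Pc: "P \<in> carrier_mat (m*N) (m*N)" using P(2) unfolding pos_def_mat_def by simp
  have N0: "N > 0" using N by simp
  show "pos_def_mat (m*N) (recip_mat m N n (\<lambda>k. if k \<le> n then block_of m P k else 0\<^sub>m m m))"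
    using recip_mat_block_of[OF N0 Pc P(1) circ band] P(2) by simp
  have "transpose_mat (block_of m P 0) = block_of m P 0"
  proof (rule eq_matI)
    fix a b assume "a < dim_row (block_of m P 0)" "b < dim_col (block_of m P 0)"
    then have "a < m" "b < m" by (auto simp: block_of_def)
    moreover have "a < m*N" "b < m*N"
      using block_index[of 0 N a m] block_index[of 0 N b m] N \<open>a < m\<close> \<open>b < m\<close> by auto
    ultimately show "transpose_mat (block_of m P 0) $$ (a,b) = block_of m P 0 $$ (a,b)"
      using symmetric_mat_index[OF P(1) Pc, of b a] by (simp add: block_of_def)
  qed (auto simp: block_of_def)
  then show "transpose_mat ((\<lambda>k. if k \<le> n then block_of m P k else 0\<^sub>m m m) 0) =
      (\<lambda>k. if k \<le> n then block_of m P k else 0\<^sub>m m m) 0" by simp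
qed (simp add: block_of_def)

lemma likelihood_le_iff:
  fixes Sig :: "real mat"
  assumes m: "m > 0" and N: "N > 2*n" and T: "T > 0"
    and y: "\<And>t. t < T \<Longrightarrow> y t \<in> carrier_vec (m*N)"
    and circ: "block_circulant m N S Sig" and sym: "transpose_mat Sig = Sig"
    and S: "\<And>k. k \<le> n \<Longrightarrow> S k = sample_cov m N T y k"
    and M: "admissible m N n M" and M': "admissible m N n M'"
  shows "likelihood m N n T y M' \<le> likelihood m N n T y M \<longleftrightarrow>
    det (recip_mat m N n M') * exp (- mat_trace (recip_mat m N n M' * Sig))
      \<le> det (recip_mat m N n M) * exp (- mat_trace (recip_mat m N n M * Sig))"
proof -
  have "likelihood m N n T y M = ((2 * pi) powr (- real (m*N) / 2) *
      sqrt (det (recip_mat m N n M) * exp (- mat_trace (recip_mat m N n M * Sig)))) ^ T" for M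
    using N by (intro likelihood_eq sum_quadratic_forms_recip_mat[OF m _ T y circ sym S]) simp
  moreover have "0 \<le> det (recip_mat m N n M) * exp (- mat_trace (recip_mat m N n M * Sig))"
    if "admissible m N n M" for M
    using pos_def_mat_det_pos[OF admissible_recip_mat[OF that N]] by simp
  moreover have "(2 * pi) powr (- real (m*N) / 2) > 0" by simp
  ultimately show ?thesis
    using power_mult_sqrt_le_iff[OF _ T] M M' by presburger
qed

theorem theorem4:
  fixes m n N T :: nat and y :: "nat \<Rightarrow> real vec" and Sig Sinv :: "real mat"
  assumes "m \<ge> 1" "n \<ge> 1" "N > 2*n" "T \<ge> 1"
    and "\<And>t. t < T \<Longrightarrow> y t \<in> carrier_vec (m*N)"
    and "band_ext_solution m N n (sample_cov m N T y) Sig Sinv"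
  shows "{M. (\<forall>k>n. M k = 0\<^sub>m m m) \<and> admissible m N n M \<and>
             (\<forall>M'. admissible m N n M' \<longrightarrow> likelihood m N n T y M' \<le> likelihood m N n T y M)}
         = {\<lambda>k. if k \<le> n then block_of m Sinv k else 0\<^sub>m m m}"
proof -
  have m: "m > 0" and N: "N > 2*n" and N0: "N > 0" and T: "T > 0" using assms(1,3,4) by auto
  obtain S Q where Sig: "transpose_mat Sig = Sig" "pos_def_mat (m*N) Sig"
    and S: "block_circulant m N S Sig" "\<And>k. k \<le> n \<Longrightarrow> S k = sample_cov m N T y k"
    and P: "Sinv \<in> carrier_mat (m*N) (m*N)" "Sig * Sinv = 1\<^sub>m (m*N)"
    and Q: "block_circulant m N Q Sinv" "banded m N n Sinv"
    using assms(6) unfolding band_ext_solution_def by blast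
  have Sig_c: "Sig \<in> carrier_mat (m*N) (m*N)" using Sig(2) unfolding pos_def_mat_def by simp
  have P_sym: "transpose_mat Sinv = Sinv" by (rule symmetric_mat_inverse[OF Sig_c Sig(1) P])
  define Mh where "Mh = (\<lambda>k. if k \<le> n then block_of m Sinv k else 0\<^sub>m m m)"
  have Mh: "admissible m N n Mh" "recip_mat m N n Mh = Sinv"
    unfolding Mh_def using admissible_block_of[OF N P_sym pos_def_mat_inverse[OF Sig P] Q]
      recip_mat_block_of[OF N0 P(1) P_sym Q] by auto
  define h where "h M = det (recip_mat m N n M) * exp (- mat_trace (recip_mat m N n M * Sig))" for M
  have h_max: "h M \<le> h Mh" "h M = h Mh \<Longrightarrow> recip_mat m N n M = Sinv" if "admissible m N n M" for M
    using det_exp_trace_max_at_inverse[OF admissible_recip_mat[OF that N] Sig_c Sig P] Mh(2)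
    unfolding h_def by auto
  have lik: "likelihood m N n T y M' \<le> likelihood m N n T y M \<longleftrightarrow> h M' \<le> h M"
    if "admissible m N n M" "admissible m N n M'" for M M'
    unfolding h_def by (rule likelihood_le_iff[OF m N T assms(5) S(1) Sig(1) S(2) that])
  have "(\<forall>k>n. M k = 0\<^sub>m m m) \<and> admissible m N n M \<and>
      (\<forall>M'. admissible m N n M' \<longrightarrow> likelihood m N n T y M' \<le> likelihood m N n T y M)
    \<longleftrightarrow> M = Mh" for M
  proof
    assume M: "(\<forall>k>n. M k = 0\<^sub>m m m) \<and> admissible m N n M \<and>
      (\<forall>M'. admissible m N n M' \<longrightarrow> likelihood m N n T y M' \<le> likelihood m N n T y M)"
    then have "h M = h Mh" using Mh(1) lik h_max by (meson order_antisym)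
    then have recip_M: "recip_mat m N n M = Sinv" using M h_max by blast
    have "Mh = (\<lambda>k. if k \<le> n then block_of m (recip_mat m N n M) k else 0\<^sub>m m m)"
      unfolding Mh_def recip_M by (rule refl)
    also have "\<dots> = M" using block_of_recip_mat_eq[of n N m M] M N by simp
    finally show "M = Mh" ..
  qed (use Mh h_max lik in \<open>auto simp: Mh_def\<close>)
  then show ?thesis unfolding Mh_def by blast
qed

end
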